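(* Let $\mu$ be a probability distribution on $\mathbb{R}_+$. Suppose that for every $c>0$ there is a probability distribution $\rho_c$ whose support is contained in $[0,c]$ and such that $\rho_c*\mu\in\mathcal{S}_{loc}$. Then $\mu\in\mathcal{S}_{loc}$.
   Context: For positive functions $f,g$ defined on some $[a,\infty)$, $f(x)\sim g(x)$ means $\lim_{x\to\infty}f(x)/g(x)=1$. $\eta*\rho$ denotes convolution of measures. The class $\mathbf{L}$ consists of nonnegative measurable $g$ on $\mathbb{R}$ with $g(x)>0$ for all sufficiently large $x$ and $g(x+a)\sim g(x)$ for every $a\in\mathbb{R}$. For $\Delta=(0,c]$, $c>0$: a distribution $\rho$ belongs to $\mathcal{L}_\Delta$ if $x\mapsto\rho((x,x+c])$ belongs to $\mathbf{L}$, and to $\mathcal{S}_\Delta$ if moreover $\rho*\rho((x,x+c])\sim 2\rho((x,x+c])$. $\mathcal{S}_{loc}$ is the class of distributions belonging to $\mathcal{S}_\Delta$ for every $\Delta=(0,c]$, $c>0$. *)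

theory Defs
  imports "HOL-Probability.Probability"
begin

definition is_distr :: "real measure \<Rightarrow> bool" where
  "is_distr M \<longleftrightarrow> prob_space M \<and> sets M = sets borel"

definition class_L :: "(real \<Rightarrow> real) \<Rightarrow> bool" where
  "class_L g \<longleftrightarrow> g \<in> borel_measurable borel \<and> (\<forall>x. 0 \<le> g x)
     \<and> eventually (\<lambda>x. 0 < g x) at_top
     \<and> (\<forall>a. ((\<lambda>x. g (x + a) / g x) \<longlongrightarrow> 1) at_top)"

definition L_Delta :: "real \<Rightarrow> real measure \<Rightarrow> bool" where
  "L_Delta c \<rho> \<longleftrightarrow> class_L (\<lambda>x. measure \<rho> {x<..x + c})"

definition S_Delta :: "real \<Rightarrow> real measure \<Rightarrow> bool" where
  "S_Delta c \<rho> \<longleftrightarrow> L_Delta c \<rho> \<and>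
     ((\<lambda>x. measure (\<rho> \<star> \<rho>) {x<..x + c} / (2 * measure \<rho> {x<..x + c})) \<longlongrightarrow> 1) at_top"

definition S_loc :: "real measure \<Rightarrow> bool" where
  "S_loc \<rho> \<longleftrightarrow> (\<forall>c>0. S_Delta c \<rho>)"

end

theory Submission
  imports Defs "HOL-Real_Asymp.Real_Asymp"
begin

text \<open>Convolving with a distribution \<open>\<rho>\<close> on \<open>[0, c]\<close> moves mass to the right by at most
  \<open>c\<close>, so for \<open>\<nu> = \<rho> \<star> \<mu>\<close> we have \<open>\<nu>(x + c, x + T] \<le> \<mu>(x, x + T] \<le> \<nu>(x, x + T + c]\<close> and
  \<open>(\<mu> \<star> \<mu>)(x, x + T] \<le> (\<nu> \<star> \<nu>)(x, x + T + 2c]\<close>. Take \<open>T = (m + 1) c\<close>. Since \<open>\<nu>\<close> is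
  locally long-tailed with step \<open>c\<close>, the \<open>\<nu>\<close>-masses of intervals of lengths \<open>j c\<close> are
  asymptotically proportional to \<open>j\<close>; this squeezes \<open>\<mu>(x + a, x + a + T] / \<mu>(x, x + T]\<close> between
  \<open>m / (m + 2)\<close> and \<open>(m + 2) / m\<close>, and \<open>m \<rightarrow> \<infinity>\<close> gives \<open>\<mu> \<in> \<L>\<^sub>\<Delta>\<close>.
  For \<open>\<S>\<^sub>\<Delta>\<close> the upper bound \<open>(m + 3) / m\<close> comes in the same way from \<open>\<nu> \<in> \<S>\<^sub>\<Delta>\<close>. The lower
  bound uses only \<open>\<mu> \<in> \<L>\<^sub>\<Delta>\<close>: cutting \<open>[0, (m + 1) T)\<close> into cells of width \<open>c\<close>,
  \<open>(\<mu> \<star> \<mu>)(x, x + T] \<ge> 2 \<Sum>\<^sub>k \<mu>(cell\<^sub>k) \<mu>(x - k c, x - k c + m c]\<close> for large \<open>x\<close>, and the ratio of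
  the right-hand side to \<open>2 \<mu>(x, x + T]\<close> tends to \<open>\<mu>[0, (m + 1) T) m / (m + 1)\<close>, which tends to 1
  because \<open>\<mu>\<close> lives on \<open>[0, \<infinity>)\<close>.\<close>

lemma is_distr_iff_real_distribution: "is_distr M \<longleftrightarrow> real_distribution M"
  by (auto simp: is_distr_def real_distribution_def real_distribution_axioms_def)

lemma pair_prob_space_real_distribution:
  "real_distribution M \<Longrightarrow> real_distribution N \<Longrightarrow> pair_prob_space M N"
  by (simp add: pair_prob_space_def pair_sigma_finite_def real_distribution_def
      prob_space_imp_sigma_finite)

lemma sets_pair_real_distribution:
  "real_distribution M \<Longrightarrow> real_distribution N \<Longrightarrow> sets (M \<Otimes>\<^sub>M N) = sets (borel \<Otimes>\<^sub>M borel)"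
  by (simp add: real_distribution.events_eq_borel cong: sets_pair_measure_cong)

lemma measurable_plus_pair_real_distribution:
  assumes "real_distribution M" "real_distribution N"
  shows "(\<lambda>p. fst p + snd p) \<in> borel_measurable (M \<Otimes>\<^sub>M N)"
  unfolding measurable_cong_sets[OF sets_pair_real_distribution[OF assms] refl] by measurable

lemma real_distribution_convolution:
  assumes "real_distribution M" "real_distribution N"
  shows "real_distribution (M \<star> N)"
proof -
  interpret pair_prob_space M N using pair_prob_space_real_distribution[OF assms] .
  have "(\<lambda>(x, y). x + y) \<in> borel_measurable (M \<Otimes>\<^sub>M N)"
    using measurable_plus_pair_real_distribution[OF assms] by (simp add: case_prod_beta')
  then show ?thesis
    by (simp add: real_distribution_def real_distribution_axioms_def convolution_def prob_space_distr)
qed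

lemma measure_convolution:
  assumes "real_distribution M" "real_distribution N" "B \<in> sets borel"
  shows "measure (M \<star> N) B = measure (M \<Otimes>\<^sub>M N) {p. fst p + snd p \<in> B}"
    and "{p. fst p + snd p \<in> B} \<in> sets (M \<Otimes>\<^sub>M N)"
proof -
  note add = measurable_plus_pair_real_distribution[OF assms(1,2)]
  have space: "space (M \<Otimes>\<^sub>M N) = UNIV"
    using assms by (simp add: space_pair_measure real_distribution.space_eq_univ)
  show "measure (M \<star> N) B = measure (M \<Otimes>\<^sub>M N) {p. fst p + snd p \<in> B}"
    using measure_distr[OF add assms(3)]
    by (simp add: convolution_def case_prod_beta' vimage_def space)
  show "{p. fst p + snd p \<in> B} \<in> sets (M \<Otimes>\<^sub>M N)"
    using measurable_sets[OF add assms(3)] by (simp add: vimage_def space)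
qed

lemma measure_pair_Times_real_distribution:
  assumes "real_distribution M" "real_distribution N" "A \<in> sets borel" "B \<in> sets borel"
  shows "measure (M \<Otimes>\<^sub>M N) (A \<times> B) = measure M A * measure N B"
proof -
  interpret pair_prob_space M N using pair_prob_space_real_distribution[OF assms(1,2)] .
  show ?thesis
    using M2.emeasure_pair_measure_Times[of A M B] assms
    by (simp add: measure_def enn2real_mult real_distribution.events_eq_borel)
qed

lemma measure_le_convolution_supported:
  assumes "real_distribution \<rho>" "real_distribution \<sigma>" "measure \<rho> {0..c} = 1"
    and "D \<in> sets borel" "B \<in> sets borel" "\<And>u v. u \<in> {0..c} \<Longrightarrow> v \<in> D \<Longrightarrow> u + v \<in> B"
  shows "measure \<sigma> D \<le> measure (\<rho> \<star> \<sigma>) B"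
proof -
  interpret pair_prob_space \<rho> \<sigma> using pair_prob_space_real_distribution[OF assms(1,2)] .
  have "measure \<sigma> D = measure (\<rho> \<Otimes>\<^sub>M \<sigma>) ({0..c} \<times> D)"
    using measure_pair_Times_real_distribution[OF assms(1,2), of "{0..c}" D] assms(3,4) by simp
  also have "\<dots> \<le> measure (\<rho> \<Otimes>\<^sub>M \<sigma>) {p. fst p + snd p \<in> B}"
    using assms(6) measure_convolution(2)[OF assms(1,2,5)] by (intro finite_measure_mono) auto
  also have "\<dots> = measure (\<rho> \<star> \<sigma>) B"
    using measure_convolution(1)[OF assms(1,2,5)] by simp
  finally show ?thesis .
qed

lemma measure_convolution_le_supported:
  assumes "real_distribution \<rho>" "real_distribution \<sigma>" "measure \<rho> {0..c} = 1"
    and "D \<in> sets borel" "B \<in> sets borel" "\<And>u v. u \<in> {0..c} \<Longrightarrow> u + v \<in> B \<Longrightarrow> v \<in> D"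
  shows "measure (\<rho> \<star> \<sigma>) B \<le> measure \<sigma> D"
proof -
  interpret pair_prob_space \<rho> \<sigma> using pair_prob_space_real_distribution[OF assms(1,2)] .
  have sets: "sets (\<rho> \<Otimes>\<^sub>M \<sigma>) = sets (borel \<Otimes>\<^sub>M borel)"
    using sets_pair_real_distribution[OF assms(1,2)] .
  have null: "measure \<rho> (- {0..c}) = 0"
    using M1.prob_compl[of "{0..c}"] assms(1,3)
    by (simp add: real_distribution.events_eq_borel real_distribution.space_eq_univ Compl_eq_Diff_UNIV)
  have "measure (\<rho> \<star> \<sigma>) B = measure (\<rho> \<Otimes>\<^sub>M \<sigma>) {p. fst p + snd p \<in> B}"
    using measure_convolution(1)[OF assms(1,2,5)] .
  also have "\<dots> \<le> measure (\<rho> \<Otimes>\<^sub>M \<sigma>) ({0..c} \<times> D \<union> (- {0..c}) \<times> UNIV)"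
    using assms(4,6) by (intro finite_measure_mono) (auto simp: sets)
  also have "\<dots> \<le> measure (\<rho> \<Otimes>\<^sub>M \<sigma>) ({0..c} \<times> D) + measure (\<rho> \<Otimes>\<^sub>M \<sigma>) ((- {0..c}) \<times> UNIV)"
    using assms(4) by (intro measure_subadditive) (auto simp: sets emeasure_eq_measure)
  also have "\<dots> = measure \<sigma> D"
    using measure_pair_Times_real_distribution[OF assms(1,2)] assms(3,4) null by simp
  finally show ?thesis .
qed

lemma measure_pair_UN_Times_real_distribution:
  assumes "real_distribution M" "real_distribution N" "finite I"
    and "disjoint_family_on (\<lambda>k. A k \<times> B k) I" "\<And>k. A k \<in> sets borel" "\<And>k. B k \<in> sets borel"
  shows "measure (M \<Otimes>\<^sub>M N) (\<Union>k\<in>I. A k \<times> B k) = (\<Sum>k\<in>I. measure M (A k) * measure N (B k))"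
proof -
  interpret pair_prob_space M N using pair_prob_space_real_distribution[OF assms(1,2)] .
  have "(\<lambda>k. A k \<times> B k) ` I \<subseteq> sets (M \<Otimes>\<^sub>M N)"
    using assms(5,6) by (auto simp: sets_pair_real_distribution[OF assms(1,2)])
  then show ?thesis
    using finite_measure_finite_Union[OF assms(3) _ assms(4)]
      measure_pair_Times_real_distribution[OF assms(1,2) assms(5,6)] by simp
qed

lemma disjoint_family_Ico_multiples:
  assumes "c \<ge> 0"
  shows "disjoint_family (\<lambda>k::nat. {real k * c..<real (Suc k) * c})"
proof -
  have "{real i * c..<real (Suc i) * c} \<inter> {real j * c..<real (Suc j) * c} = {}" if "i < j" for i j
  proof -
    have "real (Suc i) * c \<le> real j * c" using that assms by (intro mult_right_mono) auto
    then show ?thesis by auto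
  qed
  then show ?thesis
    unfolding disjoint_family_on_def by (metis inf_commute linorder_neqE_nat)
qed

lemma measure_self_convolution_ge:
  assumes \<mu>: "real_distribution \<mu>" and "c > 0" "2 * real K * c \<le> x"
  shows "2 * (\<Sum>k<K. measure \<mu> {real k * c..<real (Suc k) * c} * measure \<mu> {x - real k * c<..x - real k * c + L})
    \<le> measure (\<mu> \<star> \<mu>) {x<..x + L + c}"
proof -
  interpret pair_prob_space \<mu> \<mu> using pair_prob_space_real_distribution[OF \<mu> \<mu>] .
  define J where "J k = {real k * c..<real (Suc k) * c}" for k
  define I where "I k = {x - real k * c<..x - real k * c + L}" for k
  define P where "P = (\<Union>k\<in>{..<K}. J k \<times> I k)"
  define Q where "Q = (\<Union>k\<in>{..<K}. I k \<times> J k)"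
  have sets: "P \<in> sets (\<mu> \<Otimes>\<^sub>M \<mu>)" "Q \<in> sets (\<mu> \<Otimes>\<^sub>M \<mu>)"
    by (auto simp: P_def Q_def I_def J_def sets_pair_real_distribution[OF \<mu> \<mu>])
  have J_less: "u < real K * c" if "u \<in> J k" "k < K" for u k
  proof -
    have "real (Suc k) * c \<le> real K * c" using that \<open>c > 0\<close> by (intro mult_right_mono) auto
    then show ?thesis using that by (simp add: J_def)
  qed
  have I_greater: "real K * c < v" if "v \<in> I k" "k < K" for v k
  proof -
    have "real k * c < real K * c" using that \<open>c > 0\<close> by simp
    then show ?thesis using that assms(3) by (simp add: I_def)
  qed
  have "disjoint_family_on J {..<K}"
    using disjoint_family_Ico_multiples[of c] \<open>c > 0\<close> by (simp add: J_def disjoint_family_on_def)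
  then have "disjoint_family_on (\<lambda>k. J k \<times> I k) {..<K}" "disjoint_family_on (\<lambda>k. I k \<times> J k) {..<K}"
    by (auto simp: disjoint_family_on_def)
  then have "measure (\<mu> \<Otimes>\<^sub>M \<mu>) P = (\<Sum>k<K. measure \<mu> (J k) * measure \<mu> (I k))"
      "measure (\<mu> \<Otimes>\<^sub>M \<mu>) Q = (\<Sum>k<K. measure \<mu> (J k) * measure \<mu> (I k))"
    unfolding P_def Q_def
    by (simp_all add: I_def J_def mult.commute measure_pair_UN_Times_real_distribution[OF \<mu> \<mu>])
  then have "2 * (\<Sum>k<K. measure \<mu> (J k) * measure \<mu> (I k)) = measure (\<mu> \<Otimes>\<^sub>M \<mu>) (P \<union> Q)"
    using finite_measure_Union[OF sets] J_less I_greater by (fastforce simp: P_def Q_def)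
  also have "\<dots> \<le> measure (\<mu> \<Otimes>\<^sub>M \<mu>) {p. fst p + snd p \<in> {x<..x + L + c}}"
    using measure_convolution(2)[OF \<mu> \<mu>, of "{x<..x + L + c}"]
    by (intro finite_measure_mono) (auto simp: P_def Q_def I_def J_def algebra_simps)
  also have "\<dots> = measure (\<mu> \<star> \<mu>) {x<..x + L + c}"
    using measure_convolution(1)[OF \<mu> \<mu>] by simp
  finally show ?thesis by (simp add: I_def J_def)
qed

context finite_borel_measure
begin

lemma measure_Ioc_eq_cdf_diff: "a \<le> b \<Longrightarrow> measure M {a<..b} = cdf M b - cdf M a"
  by (cases "a = b") (simp_all add: cdf_diff_eq)

lemma measure_Ico_eq_diff:
  assumes "a \<le> b"
  shows "measure M {a..<b} = measure M {..<b} - measure M {..<a}"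
proof -
  have "{a..<b} = {..<b} - {..<a}" using assms by auto
  then show ?thesis using finite_measure_Diff[of "{..<b}" "{..<a}"] assms by (simp add: M_is_borel)
qed

lemma measure_Ioc_sum:
  assumes "0 \<le> h"
  shows "measure M {a<..a + real m * h} = (\<Sum>k<m. measure M {a + real k * h<..a + real (Suc k) * h})"
proof -
  have "measure M {a + real k * h<..a + real (Suc k) * h} = cdf M (a + real (Suc k) * h) - cdf M (a + real k * h)" for k
    using assms by (intro measure_Ioc_eq_cdf_diff) (simp add: distrib_right)
  then show ?thesis
    using sum_lessThan_telescope[of "\<lambda>k. cdf M (a + real k * h)" m] assms
    by (simp add: measure_Ioc_eq_cdf_diff)
qed

lemma measure_Ico_sum:
  assumes "0 \<le> h"
  shows "measure M {a..<a + real m * h} = (\<Sum>k<m. measure M {a + real k * h..<a + real (Suc k) * h})"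
proof -
  have "measure M {a + real k * h..<a + real (Suc k) * h} = measure M {..<a + real (Suc k) * h} - measure M {..<a + real k * h}" for k
    using assms by (intro measure_Ico_eq_diff) (simp add: distrib_right)
  then show ?thesis
    using sum_lessThan_telescope[of "\<lambda>k. measure M {..<a + real k * h}" m] assms
    by (simp add: measure_Ico_eq_diff)
qed

lemma borel_measurable_measure_Ioc:
  assumes "0 \<le> T"
  shows "(\<lambda>x. measure M {x<..x + T}) \<in> borel_measurable borel"
proof -
  have "mono (\<lambda>x. cdf M (x + T))" "mono (cdf M)"
    by (auto intro!: monoI cdf_nondecreasing)
  then have "(\<lambda>x. cdf M (x + T) - cdf M x) \<in> borel_measurable borel"
    by (intro borel_measurable_diff borel_measurable_mono)
  then show ?thesis
    using assms by (simp add: measure_Ioc_eq_cdf_diff)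
qed

lemma tendsto_measure_Ico_multiples:
  assumes "0 < c"
  shows "(\<lambda>m. measure M {0..<real m * c}) \<longlonglongrightarrow> measure M {0..}"
proof -
  have "incseq (\<lambda>m. {0..<real m * c})"
    using assms by (intro monoI) (auto intro: order.strict_trans2 mult_right_mono)
  moreover have "(\<Union>m. {0..<real m * c}) = {0..}"
  proof (intro equalityI subsetI)
    fix x :: real assume "x \<in> {0..}"
    moreover obtain m :: nat where "x / c < real m" using reals_Archimedean2 by blast
    ultimately show "x \<in> (\<Union>m. {0..<real m * c})" using assms by (auto simp: pos_divide_less_eq)
  qed auto
  ultimately show ?thesis
    using Lim_measure_incseq[of "\<lambda>m. {0..<real m * c}" M] by (simp add: emeasure_eq_measure M_is_borel image_subset_iff)
qed

end

lemma tendsto_of_asymptotic_bounds: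
  fixes f :: "'a \<Rightarrow> real"
  assumes lower: "\<And>n. n \<ge> n0 \<Longrightarrow> \<exists>lo. (lo \<longlongrightarrow> l n) F \<and> (\<forall>\<^sub>F x in F. lo x \<le> f x)"
    and upper: "\<And>n. n \<ge> n0 \<Longrightarrow> \<exists>hi. (hi \<longlongrightarrow> h n) F \<and> (\<forall>\<^sub>F x in F. f x \<le> hi x)"
    and "l \<longlonglongrightarrow> L" "h \<longlonglongrightarrow> L"
  shows "(f \<longlongrightarrow> L) F"
proof (rule order_tendstoI)
  fix y assume "y < L"
  then obtain N where "\<And>n. n \<ge> N \<Longrightarrow> y < l n"
    using order_tendstoD(1)[OF \<open>l \<longlonglongrightarrow> L\<close>] by (auto simp: eventually_sequentially)
  moreover obtain lo where "(lo \<longlongrightarrow> l (max N n0)) F" "\<forall>\<^sub>F x in F. lo x \<le> f x"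
    using lower[of "max N n0"] by auto
  ultimately have "\<forall>\<^sub>F x in F. y < lo x" "\<forall>\<^sub>F x in F. lo x \<le> f x"
    by (auto intro: order_tendstoD(1))
  then show "\<forall>\<^sub>F x in F. y < f x" by eventually_elim simp
next
  fix y assume "L < y"
  then obtain N where "\<And>n. n \<ge> N \<Longrightarrow> h n < y"
    using order_tendstoD(2)[OF \<open>h \<longlonglongrightarrow> L\<close>] by (auto simp: eventually_sequentially)
  moreover obtain hi where "(hi \<longlongrightarrow> h (max N n0)) F" "\<forall>\<^sub>F x in F. f x \<le> hi x"
    using upper[of "max N n0"] by auto
  ultimately have "\<forall>\<^sub>F x in F. hi x < y" "\<forall>\<^sub>F x in F. f x \<le> hi x"
    by (auto intro: order_tendstoD(2))
  then show "\<forall>\<^sub>F x in F. f x < y" by eventually_elim simp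
qed

lemma L_Delta_interval_ratio_tendsto_unit:
  assumes "real_distribution \<nu>" "L_Delta c \<nu>" "0 \<le> c"
  shows "((\<lambda>x. measure \<nu> {x + b<..x + b + real m * c} / measure \<nu> {x<..x + c}) \<longlongrightarrow> real m) at_top"
proof -
  interpret real_distribution \<nu> by fact
  have "((\<lambda>x. measure \<nu> {x + a<..x + a + c} / measure \<nu> {x<..x + c}) \<longlongrightarrow> 1) at_top" for a
    using assms(2) by (simp add: L_Delta_def class_L_def add.assoc)
  then have "((\<lambda>x. \<Sum>k<m. measure \<nu> {x + (b + real k * c)<..x + (b + real k * c) + c} / measure \<nu> {x<..x + c})
      \<longlongrightarrow> (\<Sum>k<m. 1)) at_top"
    by (intro tendsto_sum)
  moreover have "measure \<nu> {x + b<..x + b + real m * c} / measure \<nu> {x<..x + c} =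
      (\<Sum>k<m. measure \<nu> {x + (b + real k * c)<..x + (b + real k * c) + c} / measure \<nu> {x<..x + c})" for x
    using measure_Ioc_sum[OF assms(3), of "x + b" m]
    by (simp add: sum_divide_distrib algebra_simps)
  ultimately show ?thesis by simp
qed

lemma L_Delta_eventually_pos:
  assumes "L_Delta c \<nu>"
  shows "\<forall>\<^sub>F x in at_top. 0 < measure \<nu> {x<..x + c}"
  using assms by (simp add: L_Delta_def class_L_def)

lemma L_Delta_interval_ratio_tendsto:
  assumes "real_distribution \<nu>" "L_Delta c \<nu>" "0 \<le> c" "0 < m'"
  shows "((\<lambda>x. measure \<nu> {x + b<..x + b + real m * c} / measure \<nu> {x + b'<..x + b' + real m' * c})
    \<longlongrightarrow> real m / real m') at_top"
proof -
  let ?unit = "\<lambda>x. measure \<nu> {x<..x + c}"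
  have "((\<lambda>x. (measure \<nu> {x + b<..x + b + real m * c} / ?unit x) /
      (measure \<nu> {x + b'<..x + b' + real m' * c} / ?unit x)) \<longlongrightarrow> real m / real m') at_top"
    using assms by (intro tendsto_divide L_Delta_interval_ratio_tendsto_unit) auto
  moreover have "\<forall>\<^sub>F x in at_top. (measure \<nu> {x + b<..x + b + real m * c} / ?unit x) /
      (measure \<nu> {x + b'<..x + b' + real m' * c} / ?unit x) =
      measure \<nu> {x + b<..x + b + real m * c} / measure \<nu> {x + b'<..x + b' + real m' * c}"
    using L_Delta_eventually_pos[OF assms(2)] by eventually_elim simp
  ultimately show ?thesis by (rule Lim_transform_eventually)
qed

lemma L_Delta_interval_eventually_pos:
  assumes "real_distribution \<nu>" "L_Delta c \<nu>" "0 \<le> c" "0 < m"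
  shows "\<forall>\<^sub>F x in at_top. 0 < measure \<nu> {x + b<..x + b + real m * c}"
proof -
  have "\<forall>\<^sub>F x in at_top. 0 < measure \<nu> {x + b<..x + b + real m * c} / measure \<nu> {x<..x + c}"
    using L_Delta_interval_ratio_tendsto_unit[OF assms(1-3)] assms(4)
    by (intro order_tendstoD) auto
  with L_Delta_eventually_pos[OF assms(2)] show ?thesis
    by eventually_elim (simp add: zero_less_divide_iff)
qed

lemma convolution_square_rearrange:
  assumes "real_distribution \<rho>" "real_distribution \<mu>"
  shows "((\<rho> \<star> \<mu>) \<star> (\<rho> \<star> \<mu>)) = (\<rho> \<star> (\<rho> \<star> (\<mu> \<star> \<mu>)))"
proof -
  have fin: "finite_measure \<rho>" "finite_measure \<mu>" "finite_measure (\<rho> \<star> \<mu>)"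
    using assms real_distribution_convolution[OF assms]
    by (simp_all add: real_distribution_def prob_space.finite_measure)
  have sets: "sets \<rho> = sets borel" "sets \<mu> = sets borel"
    using assms by (simp_all add: real_distribution.events_eq_borel)
  have "((\<rho> \<star> \<mu>) \<star> (\<rho> \<star> \<mu>)) = (\<rho> \<star> (\<mu> \<star> (\<rho> \<star> \<mu>)))"
    using convolution_associative[OF fin(2,3,1)] sets by simp
  also have "(\<mu> \<star> (\<rho> \<star> \<mu>)) = ((\<mu> \<star> \<rho>) \<star> \<mu>)"
    using convolution_associative[OF fin(1,2,2)] sets by simp
  also have "(\<mu> \<star> \<rho>) = (\<rho> \<star> \<mu>)"
    using convolution_commutative[OF fin(2,1)] sets by simp
  also have "((\<rho> \<star> \<mu>) \<star> \<mu>) = (\<rho> \<star> (\<mu> \<star> \<mu>))"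
    using convolution_associative[OF fin(2,2,1)] sets by simp
  finally show ?thesis .
qed

locale S_loc_smoothable =
  fixes \<mu> :: "real measure"
  assumes real_distribution: "real_distribution \<mu>"
    and smoothing: "\<And>c. 0 < c \<Longrightarrow> \<exists>\<rho>. real_distribution \<rho> \<and> measure \<rho> {0..c} = 1 \<and> S_loc (\<rho> \<star> \<mu>)"
begin

lemma smoothed_bounds:
  assumes "0 < c"
  obtains \<nu> where "real_distribution \<nu>" "S_loc \<nu>"
    "\<And>x T. measure \<mu> {x<..x + T} \<le> measure \<nu> {x<..x + T + c}"
    "\<And>x T. measure \<nu> {x + c<..x + T} \<le> measure \<mu> {x<..x + T}"
    "\<And>x T. measure (\<mu> \<star> \<mu>) {x<..x + T} \<le> measure (\<nu> \<star> \<nu>) {x<..x + T + 2 * c}"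
proof -
  obtain \<rho> where \<rho>: "real_distribution \<rho>" "measure \<rho> {0..c} = 1" "S_loc (\<rho> \<star> \<mu>)"
    using smoothing[OF assms] by blast
  note \<mu> = real_distribution
  have \<mu>\<mu>: "real_distribution (\<mu> \<star> \<mu>)" using real_distribution_convolution[OF \<mu> \<mu>] .
  have square: "measure (\<mu> \<star> \<mu>) {x<..x + T} \<le> measure (\<rho> \<star> (\<rho> \<star> (\<mu> \<star> \<mu>))) {x<..x + T + 2 * c}" for x T
  proof -
    have "measure (\<mu> \<star> \<mu>) {x<..x + T} \<le> measure (\<rho> \<star> (\<mu> \<star> \<mu>)) {x<..x + T + c}"
      by (rule measure_le_convolution_supported[OF \<rho>(1) \<mu>\<mu> \<rho>(2)]) auto
    also have "\<dots> \<le> measure (\<rho> \<star> (\<rho> \<star> (\<mu> \<star> \<mu>))) {x<..x + T + 2 * c}"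
      using real_distribution_convolution[OF \<rho>(1) \<mu>\<mu>]
      by (intro measure_le_convolution_supported[OF \<rho>(1) _ \<rho>(2)]) auto
    finally show ?thesis .
  qed
  show ?thesis
  proof (rule that[of "\<rho> \<star> \<mu>", unfolded convolution_square_rearrange[OF \<rho>(1) \<mu>]])
    show "real_distribution (\<rho> \<star> \<mu>)" using real_distribution_convolution[OF \<rho>(1) \<mu>] .
    show "measure \<mu> {x<..x + T} \<le> measure (\<rho> \<star> \<mu>) {x<..x + T + c}" for x T
      by (rule measure_le_convolution_supported[OF \<rho>(1) \<mu> \<rho>(2)]) auto
    show "measure (\<rho> \<star> \<mu>) {x + c<..x + T} \<le> measure \<mu> {x<..x + T}" for x T
      by (rule measure_convolution_le_supported[OF \<rho>(1) \<mu> \<rho>(2)]) auto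
  qed (use \<rho>(3) square in auto)
qed

lemma interval_measure_eventually_pos:
  assumes "0 < T"
  shows "\<forall>\<^sub>F x in at_top. 0 < measure \<mu> {x<..x + T}"
proof -
  define c where "c = T / 2"
  have c: "0 < c" using assms by (simp add: c_def)
  obtain \<nu> where \<nu>: "real_distribution \<nu>" "S_loc \<nu>"
    and "\<And>x T. measure \<mu> {x<..x + T} \<le> measure \<nu> {x<..x + T + c}"
    and lower: "\<And>x T. measure \<nu> {x + c<..x + T} \<le> measure \<mu> {x<..x + T}"
    and "\<And>x T. measure (\<mu> \<star> \<mu>) {x<..x + T} \<le> measure (\<nu> \<star> \<nu>) {x<..x + T + 2 * c}"
    by (erule smoothed_bounds[OF c])
  have "L_Delta c \<nu>" using \<nu>(2) c by (simp add: S_loc_def S_Delta_def)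
  then have "\<forall>\<^sub>F x in at_top. 0 < measure \<nu> {x + c<..x + c + real 1 * c}"
    using c by (intro L_Delta_interval_eventually_pos[OF \<nu>(1)]) auto
  then show ?thesis
  proof eventually_elim
    case (elim x)
    moreover have "x + c + real 1 * c = x + T" by (simp add: c_def)
    ultimately show ?case using lower[of x T] by (simp only:)
  qed
qed

lemma shift_ratio_bounds:
  assumes "0 < T" "0 < m"
  shows "\<exists>lo. (lo \<longlongrightarrow> real m / real (m + 2)) at_top \<and>
      (\<forall>\<^sub>F x in at_top. lo x \<le> measure \<mu> {x + a<..x + a + T} / measure \<mu> {x<..x + T})"
    and "\<exists>hi. (hi \<longlongrightarrow> real (m + 2) / real m) at_top \<and>
      (\<forall>\<^sub>F x in at_top. measure \<mu> {x + a<..x + a + T} / measure \<mu> {x<..x + T} \<le> hi x)"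
proof -
  define c where "c = T / real (m + 1)"
  have c: "0 < c" and T: "T = real (m + 1) * c" using assms by (simp_all add: c_def)
  obtain \<nu> where \<nu>: "real_distribution \<nu>" "S_loc \<nu>"
    and upper: "\<And>x T. measure \<mu> {x<..x + T} \<le> measure \<nu> {x<..x + T + c}"
    and lower: "\<And>x T. measure \<nu> {x + c<..x + T} \<le> measure \<mu> {x<..x + T}"
    and "\<And>x T. measure (\<mu> \<star> \<mu>) {x<..x + T} \<le> measure (\<nu> \<star> \<nu>) {x<..x + T + 2 * c}"
    by (erule smoothed_bounds[OF c])
  have L: "L_Delta c \<nu>" using \<nu>(2) c by (simp add: S_loc_def S_Delta_def)
  have upper': "measure \<mu> {y<..y + T} \<le> measure \<nu> {y + 0<..y + 0 + real (m + 2) * c}" for y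
    using upper[of y T] by (simp add: T algebra_simps)
  have lower': "measure \<nu> {y + c<..y + c + real m * c} \<le> measure \<mu> {y<..y + T}" for y
    using lower[of y T] by (simp add: T algebra_simps)
  have pos: "\<forall>\<^sub>F x in at_top. 0 < measure \<nu> {x + c<..x + c + real m * c}"
    using L_Delta_interval_eventually_pos[OF \<nu>(1) L] c assms(2) by simp
  show "\<exists>lo. (lo \<longlongrightarrow> real m / real (m + 2)) at_top \<and>
      (\<forall>\<^sub>F x in at_top. lo x \<le> measure \<mu> {x + a<..x + a + T} / measure \<mu> {x<..x + T})"
  proof (intro exI conjI)
    show "((\<lambda>x. measure \<nu> {x + (a + c)<..x + (a + c) + real m * c} / measure \<nu> {x + 0<..x + 0 + real (m + 2) * c})
        \<longlongrightarrow> real m / real (m + 2)) at_top"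
      using c by (intro L_Delta_interval_ratio_tendsto[OF \<nu>(1) L]) auto
    show "\<forall>\<^sub>F x in at_top. measure \<nu> {x + (a + c)<..x + (a + c) + real m * c} / measure \<nu> {x + 0<..x + 0 + real (m + 2) * c}
        \<le> measure \<mu> {x + a<..x + a + T} / measure \<mu> {x<..x + T}"
      using pos
    proof eventually_elim
      case (elim x)
      then show ?case
        using lower'[of x] lower'[of "x + a"] upper'[of x] by (intro frac_le) (auto simp: add.assoc)
    qed
  qed
  show "\<exists>hi. (hi \<longlongrightarrow> real (m + 2) / real m) at_top \<and>
      (\<forall>\<^sub>F x in at_top. measure \<mu> {x + a<..x + a + T} / measure \<mu> {x<..x + T} \<le> hi x)"
  proof (intro exI conjI)
    show "((\<lambda>x. measure \<nu> {x + a<..x + a + real (m + 2) * c} / measure \<nu> {x + c<..x + c + real m * c})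
        \<longlongrightarrow> real (m + 2) / real m) at_top"
      using c assms(2) by (intro L_Delta_interval_ratio_tendsto[OF \<nu>(1) L]) auto
    show "\<forall>\<^sub>F x in at_top. measure \<mu> {x + a<..x + a + T} / measure \<mu> {x<..x + T}
        \<le> measure \<nu> {x + a<..x + a + real (m + 2) * c} / measure \<nu> {x + c<..x + c + real m * c}"
      using pos
    proof eventually_elim
      case (elim x)
      then show ?case
        using lower'[of x] upper'[of "x + a"] by (intro frac_le) auto
    qed
  qed
qed

lemma mu_L_Delta:
  assumes "0 < T"
  shows "L_Delta T \<mu>"
  unfolding L_Delta_def class_L_def
proof (intro conjI allI)
  interpret real_distribution \<mu> by (rule real_distribution)
  show "(\<lambda>x. measure \<mu> {x<..x + T}) \<in> borel_measurable borel"
    using assms by (intro borel_measurable_measure_Ioc) simp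
  show "0 \<le> measure \<mu> {x<..x + T}" for x by simp
  show "\<forall>\<^sub>F x in at_top. 0 < measure \<mu> {x<..x + T}"
    by (rule interval_measure_eventually_pos[OF assms])
  show "((\<lambda>x. measure \<mu> {x + a<..x + a + T} / measure \<mu> {x<..x + T}) \<longlongrightarrow> 1) at_top" for a
  proof (rule tendsto_of_asymptotic_bounds)
    show "\<exists>lo. (lo \<longlongrightarrow> real m / real (m + 2)) at_top \<and>
        (\<forall>\<^sub>F x in at_top. lo x \<le> measure \<mu> {x + a<..x + a + T} / measure \<mu> {x<..x + T})"
      and "\<exists>hi. (hi \<longlongrightarrow> real (m + 2) / real m) at_top \<and>
        (\<forall>\<^sub>F x in at_top. measure \<mu> {x + a<..x + a + T} / measure \<mu> {x<..x + T} \<le> hi x)"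
      if "1 \<le> m" for m
      using shift_ratio_bounds[OF assms, of m a] that by auto
    show "(\<lambda>m. real m / real (m + 2)) \<longlonglongrightarrow> 1" "(\<lambda>m. real (m + 2) / real m) \<longlonglongrightarrow> 1"
      by real_asymp+
  qed
qed

lemma self_convolution_ratio_lower:
  assumes "0 < T" "0 < m"
  shows "\<exists>lo. (lo \<longlongrightarrow> measure \<mu> {0..<real (m + 1) * T} * (real m / real (m + 1))) at_top \<and>
      (\<forall>\<^sub>F x in at_top. lo x \<le> measure (\<mu> \<star> \<mu>) {x<..x + T} / (2 * measure \<mu> {x<..x + T}))"
proof -
  interpret real_distribution \<mu> by (rule real_distribution)
  define c where "c = T / real (m + 1)"
  define K where "K = (m + 1) * (m + 1)"
  have c: "0 < c" and T: "T = real (m + 1) * c" using assms by (simp_all add: c_def)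
  have L: "L_Delta c \<mu>" using mu_L_Delta[OF c] .
  have cells: "(\<Sum>k<K. measure \<mu> {real k * c..<real (Suc k) * c}) = measure \<mu> {0..<real (m + 1) * T}"
  proof -
    have "real K * c = real (m + 1) * T" by (simp add: K_def T algebra_simps)
    then show ?thesis using measure_Ico_sum[of c 0 K] c by simp
  qed
  define lo where "lo x = (\<Sum>k<K. measure \<mu> {real k * c..<real (Suc k) * c} *
      (measure \<mu> {x - real k * c<..x - real k * c + real m * c} / measure \<mu> {x<..x + T}))" for x
  show ?thesis
  proof (intro exI conjI)
    have "((\<lambda>x. measure \<mu> {x + - (real k * c)<..x + - (real k * c) + real m * c} /
        measure \<mu> {x + 0<..x + 0 + real (m + 1) * c}) \<longlongrightarrow> real m / real (m + 1)) at_top" for k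
      using c by (intro L_Delta_interval_ratio_tendsto[OF real_distribution L]) auto
    then have "(lo \<longlongrightarrow> (\<Sum>k<K. measure \<mu> {real k * c..<real (Suc k) * c} * (real m / real (m + 1)))) at_top"
      unfolding lo_def by (intro tendsto_sum tendsto_mult_left) (simp add: T)
    then show "(lo \<longlongrightarrow> measure \<mu> {0..<real (m + 1) * T} * (real m / real (m + 1))) at_top"
      unfolding sum_distrib_right[symmetric] cells .
    show "\<forall>\<^sub>F x in at_top. lo x \<le> measure (\<mu> \<star> \<mu>) {x<..x + T} / (2 * measure \<mu> {x<..x + T})"
      using interval_measure_eventually_pos[OF assms(1)] eventually_ge_at_top[of "2 * real K * c"]
    proof eventually_elim
      case (elim x)
      have "2 * (\<Sum>k<K. measure \<mu> {real k * c..<real (Suc k) * c} * measure \<mu> {x - real k * c<..x - real k * c + real m * c})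
          \<le> measure (\<mu> \<star> \<mu>) {x<..x + T}"
        using measure_self_convolution_ge[OF real_distribution c elim(2), of "real m * c"]
        by (simp add: T algebra_simps)
      then show ?case
        using elim(1) by (simp add: lo_def sum_divide_distrib[symmetric] field_simps)
    qed
  qed
qed

lemma self_convolution_ratio_upper:
  assumes "0 < T" "0 < m"
  shows "\<exists>hi. (hi \<longlongrightarrow> real (m + 3) / real m) at_top \<and>
      (\<forall>\<^sub>F x in at_top. measure (\<mu> \<star> \<mu>) {x<..x + T} / (2 * measure \<mu> {x<..x + T}) \<le> hi x)"
proof -
  define c where "c = T / real (m + 1)"
  have c: "0 < c" and T: "T = real (m + 1) * c" using assms by (simp_all add: c_def)
  obtain \<nu> where \<nu>: "real_distribution \<nu>" "S_loc \<nu>"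
    and "\<And>x T. measure \<mu> {x<..x + T} \<le> measure \<nu> {x<..x + T + c}"
    and lower: "\<And>x T. measure \<nu> {x + c<..x + T} \<le> measure \<mu> {x<..x + T}"
    and square: "\<And>x T. measure (\<mu> \<star> \<mu>) {x<..x + T} \<le> measure (\<nu> \<star> \<nu>) {x<..x + T + 2 * c}"
    by (erule smoothed_bounds[OF c])
  have L: "L_Delta c \<nu>" using \<nu>(2) c by (simp add: S_loc_def S_Delta_def)
  let ?\<nu>\<nu> = "\<lambda>x. measure (\<nu> \<star> \<nu>) {x<..x + real (m + 3) * c}"
  let ?long = "\<lambda>x. measure \<nu> {x + 0<..x + 0 + real (m + 3) * c}"
  let ?short = "\<lambda>x. measure \<nu> {x + c<..x + c + real m * c}"
  have "((\<lambda>x. ?\<nu>\<nu> x / (2 * ?long x) * (?long x / ?short x)) \<longlongrightarrow> 1 * (real (m + 3) / real m)) at_top"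
  proof (intro tendsto_mult)
    show "((\<lambda>x. ?\<nu>\<nu> x / (2 * ?long x)) \<longlongrightarrow> 1) at_top"
      using \<nu>(2) c by (simp add: S_loc_def S_Delta_def)
    show "((\<lambda>x. ?long x / ?short x) \<longlongrightarrow> real (m + 3) / real m) at_top"
      using c assms(2) by (intro L_Delta_interval_ratio_tendsto[OF \<nu>(1) L]) auto
  qed
  moreover have "\<forall>\<^sub>F x in at_top. 0 < ?long x"
    using c by (intro L_Delta_interval_eventually_pos[OF \<nu>(1) L]) auto
  then have "\<forall>\<^sub>F x in at_top. ?\<nu>\<nu> x / (2 * ?long x) * (?long x / ?short x) = ?\<nu>\<nu> x / (2 * ?short x)"
    by eventually_elim simp
  ultimately have "((\<lambda>x. ?\<nu>\<nu> x / (2 * ?short x)) \<longlongrightarrow> real (m + 3) / real m) at_top"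
    by (simp add: Lim_transform_eventually)
  moreover have "\<forall>\<^sub>F x in at_top. measure (\<mu> \<star> \<mu>) {x<..x + T} / (2 * measure \<mu> {x<..x + T}) \<le> ?\<nu>\<nu> x / (2 * ?short x)"
    using L_Delta_interval_eventually_pos[OF \<nu>(1) L less_imp_le[OF c] assms(2), of c]
  proof eventually_elim
    case (elim x)
    then show ?case
      using square[of x T] lower[of x T] by (intro frac_le) (auto simp: T algebra_simps)
  qed
  ultimately show ?thesis by blast
qed

lemma mu_S_Delta:
  assumes "measure \<mu> {0..} = 1" "0 < T"
  shows "S_Delta T \<mu>"
  unfolding S_Delta_def
proof
  show "L_Delta T \<mu>" using mu_L_Delta[OF assms(2)] .
  interpret real_distribution \<mu> by (rule real_distribution)
  show "((\<lambda>x. measure (\<mu> \<star> \<mu>) {x<..x + T} / (2 * measure \<mu> {x<..x + T})) \<longlongrightarrow> 1) at_top"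
  proof (rule tendsto_of_asymptotic_bounds)
    show "\<exists>lo. (lo \<longlongrightarrow> measure \<mu> {0..<real (m + 1) * T} * (real m / real (m + 1))) at_top \<and>
        (\<forall>\<^sub>F x in at_top. lo x \<le> measure (\<mu> \<star> \<mu>) {x<..x + T} / (2 * measure \<mu> {x<..x + T}))"
      and "\<exists>hi. (hi \<longlongrightarrow> real (m + 3) / real m) at_top \<and>
        (\<forall>\<^sub>F x in at_top. measure (\<mu> \<star> \<mu>) {x<..x + T} / (2 * measure \<mu> {x<..x + T}) \<le> hi x)"
      if "1 \<le> m" for m
      using self_convolution_ratio_lower[OF assms(2)] self_convolution_ratio_upper[OF assms(2)] that
      by simp_all
    have "(\<lambda>m. measure \<mu> {0..<real (Suc m) * T}) \<longlonglongrightarrow> 1"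
      using LIMSEQ_Suc[OF tendsto_measure_Ico_multiples[OF assms(2)]] assms(1) by simp
    moreover have "(\<lambda>m. real m / real (m + 1)) \<longlonglongrightarrow> 1" by real_asymp
    ultimately show "(\<lambda>m. measure \<mu> {0..<real (m + 1) * T} * (real m / real (m + 1))) \<longlonglongrightarrow> 1"
      using tendsto_mult by fastforce
    show "(\<lambda>m. real (m + 3) / real m) \<longlonglongrightarrow> 1" by real_asymp
  qed
qed

end

theorem proposition1p1:
  fixes \<mu> :: "real measure"
  assumes "is_distr \<mu>" and "measure \<mu> {0..} = 1"
    and "\<forall>c>0. \<exists>\<rho>. is_distr \<rho> \<and> measure \<rho> {0..c} = 1 \<and> S_loc (\<rho> \<star> \<mu>)"
  shows "S_loc \<mu>"
proof -
  interpret S_loc_smoothable \<mu>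
    using assms(1,3) by (simp add: S_loc_smoothable_def is_distr_iff_real_distribution)
  show ?thesis unfolding S_loc_def using mu_S_Delta[OF assms(2)] by blast
qed

end
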